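(* Let $(F,t)\in U$ with $t\neq0$ and $Y=Y_{F,t}$. Then $\Gamma_1\cup\Gamma_2$ coincides with the locus in $F(Y)$ of lines on $Y$ passing through $p_0=[0,\dots,0,1]$.
   Context: $U=U_0\times\mathbb{A}^1$, where $U_0$ is the space of cubic forms $F(x_0,\dots,x_3)$ such that the curve cut out by $F$ on the quadric $x_0x_3=x_1x_2$ in $\mathbb{P}^3$ is smooth, avoids $[0,0,0,1]$, and is tangent with multiplicity $2$ to the lines $x_0=x_1=0$ and $x_0=x_2=0$. $Y_{F,t}\subset\mathbb{P}^5$ is $x_4^3-F(x_0,\dots,x_3)+x_5(x_0x_3-x_1x_2)+t\,x_0x_5^2=0$, and $F(Y)$ its Fano variety of lines. $C_i=(x_0=x_i=x_5=0)\cap(x_4^3=F)\subset\mathbb{P}^5$, $i=1,2$; for each $p\in C_i$ the line $\overline{p_0p}$ lies in $Y$, and $\Gamma_i\subset F(Y)$ denotes the image of the embedding $C_i\to F(Y)$, $p\mapsto\overline{p_0p}$. *)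

theory Defs
  imports "HOL-Analysis.Analysis"
begin

text \<open>Ground field: the complex numbers. Points of P^3 (resp. P^5) are represented by
nonzero vectors of complex^4 (resp. complex^6); coordinates x0..x3 are components 0..3,
and x0..x5 are components 0..5.\<close>

definition pt4 :: "complex \<Rightarrow> complex \<Rightarrow> complex \<Rightarrow> complex \<Rightarrow> complex^4" where
  "pt4 a b c d = (\<chi> i. if i = 0 then a else if i = 1 then b else if i = 2 then c else d)"

definition cubic_form :: "(complex^4 \<Rightarrow> complex) \<Rightarrow> bool" where
  "cubic_form F \<longleftrightarrow> (\<exists>c :: 4 \<Rightarrow> 4 \<Rightarrow> 4 \<Rightarrow> complex.
      \<forall>x. F x = (\<Sum>i\<in>UNIV. \<Sum>j\<in>UNIV. \<Sum>k\<in>UNIV. c i j k * x$i * x$j * x$k))"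

definition Qform :: "complex^4 \<Rightarrow> complex" where
  "Qform x = x$0 * x$3 - x$1 * x$2"

definition pdiff :: "(complex^4 \<Rightarrow> complex) \<Rightarrow> 4 \<Rightarrow> complex^4 \<Rightarrow> complex" where
  "pdiff G i x = deriv (\<lambda>s. G (x + s *s axis i 1)) 0"

text \<open>The curve {Q = F = 0} in P^3 is smooth: at every point of it the Jacobian
of (Q, F) has rank 2 (Jacobian criterion for complete intersections).\<close>
definition smooth_curve :: "(complex^4 \<Rightarrow> complex) \<Rightarrow> bool" where
  "smooth_curve F \<longleftrightarrow> (\<forall>x. x \<noteq> 0 \<and> Qform x = 0 \<and> F x = 0 \<longrightarrow>
      (\<forall>a b :: complex. (\<forall>i. a * pdiff Qform i x + b * pdiff F i x = 0) \<longrightarrow> a = 0 \<and> b = 0))"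

definition avoids_e3 :: "(complex^4 \<Rightarrow> complex) \<Rightarrow> bool" where
  "avoids_e3 F \<longleftrightarrow> \<not> (Qform (pt4 0 0 0 1) = 0 \<and> F (pt4 0 0 0 1) = 0)"

text \<open>Tangency with multiplicity 2 to the line x0 = x1 = 0 (which lies on the quadric):
the restriction of F to the line, a binary cubic in (x2,x3), has a root of multiplicity
exactly 2, i.e. it is l^2 m with l, m non-proportional linear forms.\<close>
definition tangent2_L1 :: "(complex^4 \<Rightarrow> complex) \<Rightarrow> bool" where
  "tangent2_L1 F \<longleftrightarrow> (\<exists>a b c d :: complex. a * d - b * c \<noteq> 0 \<and>
      (\<forall>u v. F (pt4 0 0 u v) = (b * u - a * v)^2 * (d * u - c * v)))"

definition tangent2_L2 :: "(complex^4 \<Rightarrow> complex) \<Rightarrow> bool" where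
  "tangent2_L2 F \<longleftrightarrow> (\<exists>a b c d :: complex. a * d - b * c \<noteq> 0 \<and>
      (\<forall>u v. F (pt4 0 u 0 v) = (b * u - a * v)^2 * (d * u - c * v)))"

definition U0 :: "(complex^4 \<Rightarrow> complex) set" where
  "U0 = {F. cubic_form F \<and> smooth_curve F \<and> avoids_e3 F \<and> tangent2_L1 F \<and> tangent2_L2 F}"

definition first4 :: "complex^6 \<Rightarrow> complex^4" where
  "first4 x = pt4 (x$0) (x$1) (x$2) (x$3)"

definition Yeq :: "(complex^4 \<Rightarrow> complex) \<Rightarrow> complex \<Rightarrow> complex^6 \<Rightarrow> complex" where
  "Yeq F t x = x$4 ^ 3 - F (first4 x) + x$5 * (x$0 * x$3 - x$1 * x$2) + t * x$0 * x$5 ^ 2"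

text \<open>Affine cone over Y.\<close>
definition Ycone :: "(complex^4 \<Rightarrow> complex) \<Rightarrow> complex \<Rightarrow> (complex^6) set" where
  "Ycone F t = {x. Yeq F t x = 0}"

text \<open>The projective line through the points [u],[v] of P^5, represented by the
2-dimensional linear subspace of complex^6 spanned by u, v.\<close>
definition pline :: "complex^6 \<Rightarrow> complex^6 \<Rightarrow> (complex^6) set" where
  "pline u v = {a *s u + b *s v | a b. True}"

definition lin_indep2 :: "complex^6 \<Rightarrow> complex^6 \<Rightarrow> bool" where
  "lin_indep2 u v \<longleftrightarrow> (\<forall>a b. a *s u + b *s v = 0 \<longrightarrow> a = 0 \<and> b = 0)"

definition is_pline :: "(complex^6) set \<Rightarrow> bool" where
  "is_pline L \<longleftrightarrow> (\<exists>u v. lin_indep2 u v \<and> L = pline u v)"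

definition Fano :: "(complex^4 \<Rightarrow> complex) \<Rightarrow> complex \<Rightarrow> (complex^6) set set" where
  "Fano F t = {L. is_pline L \<and> L \<subseteq> Ycone F t}"

definition p0 :: "complex^6" where
  "p0 = axis 5 1"

definition Ccurve :: "(complex^4 \<Rightarrow> complex) \<Rightarrow> 6 \<Rightarrow> (complex^6) set" where
  "Ccurve F i = {p. p \<noteq> 0 \<and> p$0 = 0 \<and> p$i = 0 \<and> p$5 = 0 \<and> p$4 ^ 3 = F (first4 p)}"

definition GammaLines :: "(complex^4 \<Rightarrow> complex) \<Rightarrow> 6 \<Rightarrow> (complex^6) set set" where
  "GammaLines F i = (\<lambda>p. pline p0 p) ` Ccurve F i"

end

theory Submission
  imports Defs
begin

text \<open>Every line through \<open>p\<^sub>0\<close> is spanned by \<open>p\<^sub>0\<close> and a point \<open>p\<close> with \<open>x\<^sub>5 = 0\<close>.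
  On such a line the equation of \<open>Y\<close> becomes the binary cubic
  \<open>a\<^sup>3 (x\<^sub>4(p)\<^sup>3 - F(p)) + a\<^sup>2 b Q(p) + t a b\<^sup>2 x\<^sub>0(p)\<close> in the coordinates \<open>a p + b p\<^sub>0\<close>,
  so the line lies on \<open>Y\<close> iff all three coefficients vanish. As \<open>t \<noteq> 0\<close> this means
  \<open>x\<^sub>0(p) = 0\<close>, hence \<open>Q(p) = -x\<^sub>1(p) x\<^sub>2(p) = 0\<close>, and \<open>x\<^sub>4(p)\<^sup>3 = F(p)\<close>: exactly \<open>p \<in> C\<^sub>1 \<union> C\<^sub>2\<close>.\<close>

lemma cubic_form_scale:
  assumes "cubic_form F"
  shows "F (c *s x) = c ^ 3 * F x"
proof -
  from assms obtain k where k: "\<And>x. F x = (\<Sum>i\<in>UNIV. \<Sum>j\<in>UNIV. \<Sum>l\<in>UNIV. k i j l * x$i * x$j * x$l)"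
    unfolding cubic_form_def by blast
  show ?thesis
    unfolding k by (simp add: sum_distrib_left algebra_simps power3_eq_cube)
qed

lemma p0_nth: "p0 $ i = (if i = 5 then 1 else 0)"
  by (simp add: p0_def axis_def)

lemma Qform_first4: "Qform (first4 p) = p$0 * p$3 - p$1 * p$2"
  by (simp add: Qform_def first4_def pt4_def)

lemma Yeq_on_line_through_p0:
  assumes "cubic_form F" "p$5 = 0"
  shows "Yeq F t (a *s p + b *s p0)
           = a ^ 3 * (p$4 ^ 3 - F (first4 p)) + a\<^sup>2 * b * Qform (first4 p) + t * a * b\<^sup>2 * p$0"
proof -
  have "first4 (a *s p + b *s p0) = a *s first4 p"
    using assms(2) by (simp add: first4_def pt4_def p0_nth vec_eq_iff)
  then have "F (first4 (a *s p + b *s p0)) = a ^ 3 * F (first4 p)"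
    using assms(1) by (simp add: cubic_form_scale)
  then show ?thesis
    using assms(2)
    by (simp add: Yeq_def Qform_def first4_def pt4_def p0_nth algebra_simps power3_eq_cube power2_eq_square)
qed

lemma quadratic_eq_0_iff:
  fixes c0 c1 c2 :: "'a::field_char_0"
  shows "(\<forall>b. c0 + c1 * b + c2 * b\<^sup>2 = 0) \<longleftrightarrow> c0 = 0 \<and> c1 = 0 \<and> c2 = 0"
proof safe
  assume h: "\<forall>b. c0 + c1 * b + c2 * b\<^sup>2 = 0"
  from h[rule_format, of 0] show c0: "c0 = 0" by simp
  from h[rule_format, of 1] h[rule_format, of "-1"] c0
  have "c1 + c2 = 0" "c2 - c1 = 0" by simp_all
  then show "c1 = 0" "c2 = 0" by simp_all
qed simp_all

lemma pline_commute: "pline u v = pline v u"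
  unfolding pline_def by (auto, (metis add.commute)+)

lemma pline_replace:
  assumes "w = \<alpha> *s u + \<beta> *s v" "\<alpha> \<noteq> 0"
  shows "pline u v = pline w v"
proof
  show "pline u v \<subseteq> pline w v"
  proof
    fix x assume "x \<in> pline u v"
    then obtain a b where x: "x = a *s u + b *s v" unfolding pline_def by blast
    have "x = (a / \<alpha>) *s w + (b - a * \<beta> / \<alpha>) *s v"
      using assms by (simp add: x vec_eq_iff field_simps)
    then show "x \<in> pline w v" unfolding pline_def by blast
  qed
next
  show "pline w v \<subseteq> pline u v"
  proof
    fix x assume "x \<in> pline w v"
    then obtain a b where x: "x = a *s w + b *s v" unfolding pline_def by blast
    have "x = (a * \<alpha>) *s u + (a * \<beta> + b) *s v"
      using assms by (simp add: x vec_eq_iff algebra_simps)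
    then show "x \<in> pline u v" unfolding pline_def by blast
  qed
qed

lemma lin_indep2_commute: "lin_indep2 u v \<longleftrightarrow> lin_indep2 v u"
  unfolding lin_indep2_def by (metis add.commute)

lemma lin_indep2_replace:
  assumes "lin_indep2 u v" "w = \<alpha> *s u + \<beta> *s v" "\<alpha> \<noteq> 0"
  shows "lin_indep2 w v"
  unfolding lin_indep2_def
proof (intro allI impI)
  fix a b assume "a *s w + b *s v = 0"
  then have "(a * \<alpha>) *s u + (a * \<beta> + b) *s v = 0"
    using assms(2) by (simp add: vec_eq_iff algebra_simps)
  then have "a * \<alpha> = 0" "a * \<beta> + b = 0"
    using assms(1) unfolding lin_indep2_def by blast+
  then show "a = 0 \<and> b = 0" using assms(3) by simp
qed

lemma lin_indep2_nonzero:
  assumes "lin_indep2 u v"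
  shows "u \<noteq> 0"
proof
  assume "u = 0"
  then have "1 *s u + 0 *s v = 0" by simp
  with assms have "(1::complex) = 0" unfolding lin_indep2_def by blast
  then show False by simp
qed

lemma lin_indep2_p0:
  assumes "p$5 = 0" "p \<noteq> 0"
  shows "lin_indep2 p0 p"
  unfolding lin_indep2_def
proof (intro allI impI)
  fix a b assume h: "a *s p0 + b *s p = 0"
  then have "(a *s p0 + b *s p)$5 = 0" by simp
  then have "a = 0" using assms(1) by (simp add: p0_nth)
  with h assms(2) show "a = 0 \<and> b = 0" by simp
qed

lemma pline_through:
  assumes "lin_indep2 u v" "w \<in> pline u v" "w \<noteq> 0"
  obtains z where "lin_indep2 w z" "pline u v = pline w z"
proof -
  obtain \<alpha> \<beta> where w: "w = \<alpha> *s u + \<beta> *s v"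
    using assms(2) unfolding pline_def by blast
  show thesis
  proof (cases "\<alpha> = 0")
    case False
    then show thesis
      using that[of v] lin_indep2_replace[OF assms(1) w] pline_replace[OF w] by blast
  next
    case True
    with w assms(3) have "\<beta> \<noteq> 0" by auto
    moreover have w': "w = \<beta> *s v + \<alpha> *s u" using w by (simp add: add.commute)
    moreover have "lin_indep2 v u" using assms(1) lin_indep2_commute by blast
    ultimately show thesis
      using that[of u] lin_indep2_replace[OF _ w'] pline_replace[OF w'] pline_commute by metis
  qed
qed

lemma pline_through_p0:
  assumes "is_pline L" "p0 \<in> L"
  obtains p where "p$5 = 0" "p \<noteq> 0" "L = pline p0 p"
proof -
  obtain u v where "lin_indep2 u v" and L: "L = pline u v"
    using assms(1) unfolding is_pline_def by blast
  moreover have "p0 \<noteq> 0" by (simp add: vec_eq_iff p0_nth exI[of _ 5])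
  ultimately obtain w where w: "lin_indep2 p0 w" "L = pline p0 w"
    using pline_through assms(2) by metis
  define p where "p = 1 *s w + (- w$5) *s p0"
  have "lin_indep2 p p0"
    using lin_indep2_replace[OF _ p_def] w(1) lin_indep2_commute by simp
  moreover have "L = pline p0 p"
    using pline_replace[OF p_def] w(2) pline_commute by simp
  moreover have "p$5 = 0" by (simp add: p_def p0_nth)
  ultimately show thesis using that lin_indep2_nonzero by blast
qed

lemma lines_through_p0:
  "{L \<in> Fano F t. p0 \<in> L} = (\<lambda>p. pline p0 p) ` {p. p \<noteq> 0 \<and> p$5 = 0 \<and> pline p0 p \<subseteq> Ycone F t}"
proof (intro equalityI subsetI)
  fix L assume "L \<in> {L \<in> Fano F t. p0 \<in> L}"
  then have "is_pline L" "L \<subseteq> Ycone F t" "p0 \<in> L" unfolding Fano_def by auto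
  moreover obtain p where "p$5 = 0" "p \<noteq> 0" "L = pline p0 p"
    using pline_through_p0 calculation(1,3) by blast
  ultimately show "L \<in> (\<lambda>p. pline p0 p) ` {p. p \<noteq> 0 \<and> p$5 = 0 \<and> pline p0 p \<subseteq> Ycone F t}"
    by blast
next
  fix L assume "L \<in> (\<lambda>p. pline p0 p) ` {p. p \<noteq> 0 \<and> p$5 = 0 \<and> pline p0 p \<subseteq> Ycone F t}"
  then obtain p where p: "p \<noteq> 0" "p$5 = 0" "pline p0 p \<subseteq> Ycone F t" and L: "L = pline p0 p"
    by blast
  have "p0 = 1 *s p0 + 0 *s p" by simp
  then have "p0 \<in> L" unfolding L pline_def by blast
  with p L lin_indep2_p0 show "L \<in> {L \<in> Fano F t. p0 \<in> L}"
    unfolding Fano_def is_pline_def by blast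
qed

lemma pline_p0_subset_Ycone_iff:
  assumes "cubic_form F" "p$5 = 0" "t \<noteq> 0"
  shows "pline p0 p \<subseteq> Ycone F t \<longleftrightarrow> p$0 = 0 \<and> p$1 * p$2 = 0 \<and> p$4 ^ 3 = F (first4 p)"
proof -
  define c0 where "c0 = p$4 ^ 3 - F (first4 p)"
  define c1 where "c1 = Qform (first4 p)"
  define c2 where "c2 = t * p$0"
  have Y: "Yeq F t (a *s p + b *s p0) = a ^ 3 * c0 + a\<^sup>2 * b * c1 + a * b\<^sup>2 * c2" for a b
    unfolding c0_def c1_def c2_def Yeq_on_line_through_p0[OF assms(1,2)] by (simp add: algebra_simps)
  have line: "pline p0 p = {a *s p + b *s p0 | a b. True}"
    using pline_commute[of p0 p] by (simp add: pline_def)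
  have "pline p0 p \<subseteq> Ycone F t \<longleftrightarrow> (\<forall>a b. Yeq F t (a *s p + b *s p0) = 0)"
    unfolding line Ycone_def by auto
  also have "\<dots> \<longleftrightarrow> c0 = 0 \<and> c1 = 0 \<and> c2 = 0"
  proof
    assume "\<forall>a b. Yeq F t (a *s p + b *s p0) = 0"
    then have "\<forall>b. Yeq F t (1 *s p + b *s p0) = 0" by blast
    then have "\<forall>b. c0 + c1 * b + c2 * b\<^sup>2 = 0" unfolding Y by (simp add: mult.commute)
    then show "c0 = 0 \<and> c1 = 0 \<and> c2 = 0" using quadratic_eq_0_iff by blast
  qed (simp add: Y)
  also have "\<dots> \<longleftrightarrow> p$0 = 0 \<and> p$1 * p$2 = 0 \<and> p$4 ^ 3 = F (first4 p)"
    using assms(3) by (auto simp: c0_def c1_def c2_def Qform_first4)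
  finally show ?thesis .
qed

theorem lemma5p4:
  fixes F :: "complex^4 \<Rightarrow> complex" and t :: complex
  assumes "F \<in> U0" and "t \<noteq> 0"
  shows "GammaLines F 1 \<union> GammaLines F 2 = {L \<in> Fano F t. p0 \<in> L}"
proof -
  have "cubic_form F" using assms(1) by (simp add: U0_def)
  then have "Ccurve F 1 \<union> Ccurve F 2 = {p. p \<noteq> 0 \<and> p$5 = 0 \<and> pline p0 p \<subseteq> Ycone F t}"
    using pline_p0_subset_Ycone_iff assms(2) unfolding Ccurve_def by auto
  then show ?thesis
    unfolding GammaLines_def lines_through_p0 image_Un[symmetric] by simp
qed

end
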